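(* Let $(Y,f)$ be an expansive dynamical system with expansiveness constant $\varepsilon_Y$, equipped with an adapted metric. Suppose $y_1\sim_{\mathrm{lcs}}y_2$ with stable local conjugacy $\gamma$. Given $0<\varepsilon\le\varepsilon_Y$, there exist $\delta>0$ and $N\in\mathbb{N}$ such that for every $n\ge N$ the stable local conjugacy \[ f^n\circ\gamma\circ f^{-n}:Y^u(f^n(y_1),\delta)\to Y^u(f^n(y_2),\varepsilon) \] from $f^n(y_1)$ to $f^n(y_2)$ is well defined (i.e. its image is contained in $Y^u(f^n(y_2),\varepsilon)$) and is given by $z\mapsto[z,f^n(y_2)]$ for $z\in Y^u(f^n(y_1),\delta)$.
   Context: $(Y,f)$: compact metric space with homeomorphism $f$; expansive with constant $\varepsilon_Y$: $d(f^ny,f^ny')\le\varepsilon_Y$ for all $n\in\mathbb{Z}$ implies $y=y'$. Local sets $Y^s(y,\varepsilon)=\{z:d(f^ny,f^nz)<\varepsilon\ \forall n\ge0\}$, $Y^u(y,\varepsilon)=\{z:d(f^{-n}y,f^{-n}z)<\varepsilon\ \forall n\ge0\}$; $Y^u(y)$ = unstable class ($d(f^{-n}y,f^{-n}z)\to0$). Bracket: $[a,b]$ is the unique point of $Y^s(a,\varepsilon)\cap Y^u(b,\varepsilon)$ when this is nonempty. Adapted metric: a compatible metric with $\eta>0$, $0<\lambda<1$ such that $f$ contracts by $\lambda$ on $Y^s(y,\eta)$ and $f^{-1}$ contracts by $\lambda$ on $Y^u(y,\eta)$. Stable local conjugacy from $y_1$ to $y_2$: a homeomorphism $\gamma:U\to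 V$ between open neighbourhoods $U\ni y_1$ in $Y^u(y_1)$ and $V\ni y_2$ in $Y^u(y_2)$ with $\gamma(y_1)=y_2$ and $\sup_{z\in U}d(f^kz,f^k\gamma(z))\to0$ as $k\to\infty$; $y_1\sim_{\mathrm{lcs}}y_2$ if one exists. *)

theory Defs
  imports "HOL-Analysis.Analysis"
begin

definition fpow :: "('a \<Rightarrow> 'a) \<Rightarrow> int \<Rightarrow> 'a \<Rightarrow> 'a" where
  "fpow f n = (if 0 \<le> n then f ^^ nat n else inv f ^^ nat (- n))"

definition expansive_const :: "('a::metric_space \<Rightarrow> 'a) \<Rightarrow> real \<Rightarrow> bool" where
  "expansive_const f e \<longleftrightarrow> 0 < e \<and>
     (\<forall>y y'. (\<forall>n::int. dist (fpow f n y) (fpow f n y') \<le> e) \<longrightarrow> y = y')"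

definition Ys :: "('a::metric_space \<Rightarrow> 'a) \<Rightarrow> 'a \<Rightarrow> real \<Rightarrow> 'a set" where
  "Ys f y e = {z. \<forall>n::nat. dist ((f ^^ n) y) ((f ^^ n) z) < e}"

definition Yu :: "('a::metric_space \<Rightarrow> 'a) \<Rightarrow> 'a \<Rightarrow> real \<Rightarrow> 'a set" where
  "Yu f y e = {z. \<forall>n::nat. dist ((inv f ^^ n) y) ((inv f ^^ n) z) < e}"

definition Yu_class :: "('a::metric_space \<Rightarrow> 'a) \<Rightarrow> 'a \<Rightarrow> 'a set" where
  "Yu_class f y = {z. (\<lambda>n. dist ((inv f ^^ n) y) ((inv f ^^ n) z)) \<longlonglongrightarrow> 0}"

definition bracket :: "('a::metric_space \<Rightarrow> 'a) \<Rightarrow> real \<Rightarrow> 'a \<Rightarrow> 'a \<Rightarrow> 'a" where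
  "bracket f e a b = (THE x. x \<in> Ys f a e \<inter> Yu f b e)"

definition adapted_metric :: "('a::metric_space \<Rightarrow> 'a) \<Rightarrow> bool" where
  "adapted_metric f \<longleftrightarrow> (\<exists>\<eta> lam. 0 < \<eta> \<and> 0 < lam \<and> lam < 1 \<and>
     (\<forall>y. \<forall>z\<in>Ys f y \<eta>. \<forall>z'\<in>Ys f y \<eta>. dist (f z) (f z') \<le> lam * dist z z') \<and>
     (\<forall>y. \<forall>z\<in>Yu f y \<eta>. \<forall>z'\<in>Yu f y \<eta>. dist (inv f z) (inv f z') \<le> lam * dist z z'))"

definition u_open :: "('a::metric_space \<Rightarrow> 'a) \<Rightarrow> 'a set \<Rightarrow> bool" where
  "u_open f U \<longleftrightarrow> (\<forall>z\<in>U. \<exists>e>0. Yu f z e \<subseteq> U)"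

definition u_continuous_on :: "('a::metric_space \<Rightarrow> 'a) \<Rightarrow> 'a set \<Rightarrow> ('a \<Rightarrow> 'a) \<Rightarrow> bool" where
  "u_continuous_on f U g \<longleftrightarrow>
     (\<forall>z\<in>U. \<forall>e>0. \<exists>d>0. \<forall>w\<in>U \<inter> Yu f z d. g w \<in> Yu f (g z) e)"

definition stable_local_conj ::
  "('a::metric_space \<Rightarrow> 'a) \<Rightarrow> 'a \<Rightarrow> 'a \<Rightarrow> 'a set \<Rightarrow> 'a set \<Rightarrow> ('a \<Rightarrow> 'a) \<Rightarrow> bool" where
  "stable_local_conj f y1 y2 U V \<gamma> \<longleftrightarrow>
     y1 \<in> U \<and> U \<subseteq> Yu_class f y1 \<and> u_open f U \<and>
     y2 \<in> V \<and> V \<subseteq> Yu_class f y2 \<and> u_open f V \<and>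
     bij_betw \<gamma> U V \<and> u_continuous_on f U \<gamma> \<and> u_continuous_on f V (inv_into U \<gamma>) \<and>
     \<gamma> y1 = y2 \<and>
     (\<forall>e>0. \<exists>K. \<forall>k\<ge>K. \<forall>z\<in>U. dist ((f ^^ k) z) ((f ^^ k) (\<gamma> z)) < e)"

end

theory Submission
  imports Defs
begin

text \<open>Pull z back to u = f^-n z; for small \<delta> this lies in U close to y1. By uniform
  convergence of the conjugacy, w = f^n (\<gamma> u) follows the forward orbit of z once n \<ge> N. Backwards,
  w follows f^n y2: beyond time n because \<gamma> is continuous at y1, and over the last n steps
  because the forward orbits of u and y1 stay close, so those of \<gamma> u and y2 do too (by continuity of
  f for the first N iterates and by uniform convergence afterwards). Hence w lies in
  Ys(z, e) \<inter> Yu(f^n y2, e) for an arbitrarily small e, and expansiveness identifies w with the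
  bracket [z, f^n y2] as long as \<epsilon> + e is still an expansive constant. On a compact space every
  expansive constant can be enlarged a little, which is why \<epsilon> may go up to \<epsilon>Y rather than \<epsilon>Y/2.\<close>

lemma fpow_of_nat [simp]: "fpow f (int n) = f ^^ n"
  by (simp add: fpow_def)

lemma fpow_minus_of_nat [simp]: "fpow f (- int n) = inv f ^^ n"
  by (cases "n = 0") (simp_all add: fpow_def)

lemma fpow_plus_1:
  assumes "bij f"
  shows "fpow f (i + 1) x = f (fpow f i x)"
proof (cases "0 \<le> i")
  case True
  then show ?thesis by (simp add: fpow_def nat_add_distrib)
next
  case False
  define m where "m = nat (- i - 1)"
  have i: "i = - int (Suc m)" and i1: "i + 1 = - int m" using False by (simp_all add: m_def)
  have "fpow f i x = inv f ((inv f ^^ m) x)" unfolding i fpow_minus_of_nat by simp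
  then show ?thesis unfolding i1 using assms by (simp add: bij_is_surj surj_f_inv_f)
qed

lemma fpow_minus_1:
  assumes "bij f"
  shows "fpow f (i - 1) x = inv f (fpow f i x)"
  using fpow_plus_1[OF assms, of "i - 1"] assms by (simp add: bij_is_inj)

lemma fpow_add:
  assumes "bij f"
  shows "fpow f i (fpow f j x) = fpow f (i + j) x"
proof (induction i rule: int_induct[where k = 0])
  case base
  then show ?case by (simp add: fpow_def)
next
  case (step1 i)
  have "fpow f (i + 1 + j) x = fpow f ((i + j) + 1) x" by (simp add: ac_simps)
  then show ?case using step1 by (simp add: fpow_plus_1[OF assms])
next
  case (step2 i)
  have "fpow f (i - 1 + j) x = fpow f ((i + j) - 1) x" by (simp add: algebra_simps)
  then show ?case using step2 by (simp add: fpow_minus_1[OF assms])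
qed

lemma continuous_on_funpow:
  fixes g :: "'a::topological_space \<Rightarrow> 'a"
  assumes "continuous_on UNIV g"
  shows "continuous_on UNIV (g ^^ n)"
proof (induction n)
  case (Suc n)
  have "continuous_on UNIV (g \<circ> g ^^ n)"
    using Suc assms by (metis continuous_on_compose continuous_on_subset subset_UNIV)
  then show ?case by simp
qed (simp add: continuous_on_id)

lemma continuous_on_fpow:
  "continuous_on UNIV f \<Longrightarrow> continuous_on UNIV (inv f) \<Longrightarrow> continuous_on UNIV (fpow f i)"
  by (simp add: fpow_def continuous_on_funpow)

lemma expansive_const_enlarge:
  fixes f :: "'a::metric_space \<Rightarrow> 'a"
  assumes cpt: "compact (UNIV :: 'a set)" and "bij f"
    and cont: "continuous_on UNIV f" "continuous_on UNIV (inv f)"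
    and exp: "expansive_const f c"
  shows "\<exists>c'>c. expansive_const f c'"
proof (rule ccontr)
  assume no_larger: "\<not> (\<exists>c'>c. expansive_const f c')"
  have "0 < c" using exp by (simp add: expansive_const_def)
  \<comment> \<open>By compactness the nested nonempty closed sets K e meet, in a pair at distance at
    least c whose orbits stay c-close.\<close>
  define K where "K e = {p. c \<le> dist (fst p) (snd p) \<and>
      (\<forall>m. dist (fpow f m (fst p)) (fpow f m (snd p)) \<le> c + e)}" for e
  have closed_K: "closed (K e)" for e
    unfolding K_def
    by (intro closed_Collect_conj closed_Collect_all closed_Collect_le continuous_intros
        continuous_on_compose2[OF continuous_on_fpow[OF cont]]) auto
  have K_nonempty: "K e \<noteq> {}" if e: "0 < e" for e
  proof -
    have "\<not> expansive_const f (c + e)" using no_larger e by simp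
    then obtain x y where "x \<noteq> y" and close: "\<forall>m. dist (fpow f m x) (fpow f m y) \<le> c + e"
      using \<open>0 < c\<close> e unfolding expansive_const_def by auto
    then obtain n where "c < dist (fpow f n x) (fpow f n y)"
      using exp unfolding expansive_const_def by (meson not_le)
    moreover have "dist (fpow f m (fpow f n x)) (fpow f m (fpow f n y)) \<le> c + e" for m
      using close[rule_format, of "m + n"] by (simp add: fpow_add \<open>bij f\<close>)
    ultimately have "(fpow f n x, fpow f n y) \<in> K e" by (auto simp: K_def)
    then show ?thesis by blast
  qed
  have K_mono: "K d \<subseteq> K e" if "d \<le> e" for d e
    using that unfolding K_def by (auto intro: order_trans)
  have "UNIV \<inter> \<Inter>(K ` {0<..}) \<noteq> {}"
  proof (rule compact_imp_fip)
    show "compact (UNIV :: ('a \<times> 'a) set)" using compact_Times[OF cpt cpt] by simp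
  next
    fix F assume "finite F" "F \<subseteq> K ` {0<..}"
    then obtain E where E: "E \<subseteq> {0<..}" "finite E" "F = K ` E"
      by (metis finite_subset_image)
    show "UNIV \<inter> \<Inter>F \<noteq> {}"
    proof (cases "E = {}")
      case False
      then have "K (Min E) \<subseteq> \<Inter>F" using E K_mono[OF Min_le] by blast
      moreover have "K (Min E) \<noteq> {}" using E False by (intro K_nonempty) auto
      ultimately show ?thesis by blast
    qed (use E in auto)
  qed (use closed_K in auto)
  then obtain p where p: "\<And>e. 0 < e \<Longrightarrow> p \<in> K e" by auto
  have "dist (fpow f m (fst p)) (fpow f m (snd p)) \<le> c" for m
    by (rule field_le_epsilon) (use p in \<open>auto simp: K_def\<close>)
  then have "fst p = snd p" using exp unfolding expansive_const_def by blast
  moreover have "c \<le> dist (fst p) (snd p)" using p[of 1] by (simp add: K_def)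
  ultimately show False using \<open>0 < c\<close> by simp
qed

lemma Ys_mono: "a \<le> b \<Longrightarrow> Ys f y a \<subseteq> Ys f y b"
  unfolding Ys_def by (auto intro: less_le_trans)

lemma Yu_mono: "a \<le> b \<Longrightarrow> Yu f y a \<subseteq> Yu f y b"
  unfolding Yu_def by (auto intro: less_le_trans)

lemma Yu_dist_center: "z \<in> Yu f y e \<Longrightarrow> dist y z < e"
  unfolding Yu_def by (metis (mono_tags) mem_Collect_eq funpow_0)

lemma inv_funpow_funpow_le:
  assumes "bij f" "k \<le> n"
  shows "(inv f ^^ k) ((f ^^ n) x) = (f ^^ (n - k)) x"
proof -
  have "(f ^^ n) x = (f ^^ k) ((f ^^ (n - k)) x)"
    using assms(2) by (metis funpow_add le_add_diff_inverse comp_apply)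
  then show ?thesis using inv_fn_o_fn_is_id[OF assms(1)] by (metis comp_apply)
qed

lemma inv_funpow_funpow_ge:
  assumes "bij f" "n \<le> k"
  shows "(inv f ^^ k) ((f ^^ n) x) = (inv f ^^ (k - n)) x"
proof -
  have "(inv f ^^ k) = (inv f ^^ (k - n)) \<circ> (inv f ^^ n)"
    using assms(2) by (metis funpow_add le_add_diff_inverse2)
  then show ?thesis using inv_fn_o_fn_is_id[OF assms(1)] by (metis comp_apply)
qed

lemma Ys_funpow_iff:
  "(f ^^ n) w \<in> Ys f ((f ^^ n) u) e \<longleftrightarrow> (\<forall>k\<ge>n. dist ((f ^^ k) u) ((f ^^ k) w) < e)"
proof -
  have shift: "(f ^^ j) ((f ^^ n) x) = (f ^^ (j + n)) x" for j x by (simp add: funpow_add)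
  show ?thesis
    unfolding Ys_def mem_Collect_eq shift
    by (metis le_add2 le_add_diff_inverse2)
qed

lemma Yu_funpow_iff:
  assumes "bij f"
  shows "(f ^^ n) u \<in> Yu f ((f ^^ n) y) e \<longleftrightarrow>
    u \<in> Yu f y e \<and> (\<forall>m\<le>n. dist ((f ^^ m) y) ((f ^^ m) u) < e)"
    (is "?lhs \<longleftrightarrow> ?rhs")
proof
  assume ?lhs
  then have close: "dist ((inv f ^^ k) ((f ^^ n) y)) ((inv f ^^ k) ((f ^^ n) u)) < e" for k
    by (simp add: Yu_def)
  have "u \<in> Yu f y e"
    using close[of "j + n" for j] assms by (simp add: Yu_def inv_funpow_funpow_ge)
  moreover have "dist ((f ^^ m) y) ((f ^^ m) u) < e" if "m \<le> n" for m
    using close[of "n - m"] assms that by (simp add: inv_funpow_funpow_le)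
  ultimately show ?rhs by blast
next
  assume rhs: ?rhs
  have "dist ((inv f ^^ k) ((f ^^ n) y)) ((inv f ^^ k) ((f ^^ n) u)) < e" for k
  proof (cases "k \<le> n")
    case True
    then show ?thesis using rhs assms by (simp add: inv_funpow_funpow_le)
  next
    case False
    then show ?thesis using rhs assms by (simp add: inv_funpow_funpow_ge Yu_def)
  qed
  then show ?lhs by (simp add: Yu_def)
qed

lemma Ys_Yu_inter_unique:
  assumes exp: "expansive_const f c" and "a + b \<le> c"
    and x: "x \<in> Ys f z a \<inter> Yu f p a" and w: "w \<in> Ys f z b \<inter> Yu f p b"
  shows "x = w"
proof -
  have "dist (fpow f j x) (fpow f j w) \<le> c" for j
  proof (cases "0 \<le> j")
    case True
    have "dist ((f ^^ nat j) x) ((f ^^ nat j) w) \<le>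
        dist ((f ^^ nat j) z) ((f ^^ nat j) x) + dist ((f ^^ nat j) z) ((f ^^ nat j) w)"
      by (rule dist_triangle3)
    also have "\<dots> < a + b" using x w by (intro add_strict_mono) (auto simp: Ys_def)
    finally show ?thesis using True \<open>a + b \<le> c\<close> by (simp add: fpow_def)
  next
    case False
    let ?g = "inv f ^^ nat (- j)"
    have "dist (?g x) (?g w) \<le> dist (?g p) (?g x) + dist (?g p) (?g w)"
      by (rule dist_triangle3)
    also have "\<dots> < a + b" using x w by (intro add_strict_mono) (auto simp: Yu_def)
    finally show ?thesis using False \<open>a + b \<le> c\<close> by (simp add: fpow_def)
  qed
  then show ?thesis using exp unfolding expansive_const_def by blast
qed

lemma bracket_eqI:
  assumes "expansive_const f c" "\<epsilon> + e \<le> c" "e \<le> \<epsilon>" "w \<in> Ys f z e \<inter> Yu f p e"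
  shows "bracket f \<epsilon> z p = w"
  unfolding bracket_def
proof (rule the_equality)
  show "w \<in> Ys f z \<epsilon> \<inter> Yu f p \<epsilon>" using assms(3,4) Ys_mono Yu_mono by blast
  show "x = w" if "x \<in> Ys f z \<epsilon> \<inter> Yu f p \<epsilon>" for x
    using Ys_Yu_inter_unique[OF assms(1,2) that assms(4)] .
qed

lemma conj_preserves_forward_closeness:
  fixes f :: "'a::metric_space \<Rightarrow> 'a"
  assumes cont: "continuous_on UNIV f" and "y1 \<in> U" "\<gamma> y1 = y2"
    and unif: "\<And>e. 0 < e \<Longrightarrow> \<exists>K. \<forall>k\<ge>K. \<forall>z\<in>U. dist ((f ^^ k) z) ((f ^^ k) (\<gamma> z)) < e"
    and "0 < e"
  obtains \<delta> where "0 < \<delta>"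
    and "\<And>u m. u \<in> U \<Longrightarrow> dist y2 (\<gamma> u) < \<delta> \<Longrightarrow> dist ((f ^^ m) y1) ((f ^^ m) u) < \<delta> \<Longrightarrow>
           dist ((f ^^ m) y2) ((f ^^ m) (\<gamma> u)) < e"
proof -
  obtain K where K: "\<And>k z. K \<le> k \<Longrightarrow> z \<in> U \<Longrightarrow> dist ((f ^^ k) z) ((f ^^ k) (\<gamma> z)) < e / 3"
    using unif[of "e / 3"] \<open>0 < e\<close> by auto
  have "\<forall>m\<in>{..<K}. eventually (\<lambda>a. dist ((f ^^ m) a) ((f ^^ m) y2) < e) (nhds y2)"
    using continuous_on_funpow[OF cont] \<open>0 < e\<close>
    by (auto simp: continuous_on_iff eventually_nhds_metric)
  then have "eventually (\<lambda>a. \<forall>m\<in>{..<K}. dist ((f ^^ m) a) ((f ^^ m) y2) < e) (nhds y2)"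
    by (intro eventually_ball_finite) auto
  then obtain \<rho> where "0 < \<rho>"
    and \<rho>: "\<And>a m. dist a y2 < \<rho> \<Longrightarrow> m < K \<Longrightarrow> dist ((f ^^ m) a) ((f ^^ m) y2) < e"
    unfolding eventually_nhds_metric by auto
  show ?thesis
  proof (rule that[of "min \<rho> (e / 3)"])
    show "0 < min \<rho> (e / 3)" using \<open>0 < \<rho>\<close> \<open>0 < e\<close> by simp
    fix u m
    assume u: "u \<in> U" and "dist y2 (\<gamma> u) < min \<rho> (e / 3)"
      and y1_u: "dist ((f ^^ m) y1) ((f ^^ m) u) < min \<rho> (e / 3)"
    show "dist ((f ^^ m) y2) ((f ^^ m) (\<gamma> u)) < e"
    proof (cases "m < K")
      case True
      then show ?thesis
        using \<rho>[of "\<gamma> u" m] \<open>dist y2 (\<gamma> u) < min \<rho> (e / 3)\<close> by (simp add: dist_commute)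
    next
      case False
      have "dist ((f ^^ m) y2) ((f ^^ m) (\<gamma> u)) \<le> dist ((f ^^ m) y1) ((f ^^ m) y2)
          + dist ((f ^^ m) y1) ((f ^^ m) u) + dist ((f ^^ m) u) ((f ^^ m) (\<gamma> u))"
        using dist_triangle[of "(f ^^ m) y2" "(f ^^ m) (\<gamma> u)" "(f ^^ m) y1"]
          dist_triangle[of "(f ^^ m) y1" "(f ^^ m) (\<gamma> u)" "(f ^^ m) u"]
        by (simp add: dist_commute)
      also have "\<dots> < e / 3 + e / 3 + e / 3"
        using K[of m y1] K[of m u] False u y1_u \<open>y1 \<in> U\<close> \<open>\<gamma> y1 = y2\<close>
        by (intro add_strict_mono) auto
      finally show ?thesis by simp
    qed
  qed
qed

lemma stable_local_conj_iterate_into_local_sets: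
  fixes f :: "'a::metric_space \<Rightarrow> 'a"
  assumes "bij f" "continuous_on UNIV f" "stable_local_conj f y1 y2 U V \<gamma>" "0 < e"
  shows "\<exists>\<delta>>0. \<exists>N. \<forall>n\<ge>N. \<forall>u. (f ^^ n) u \<in> Yu f ((f ^^ n) y1) \<delta> \<longrightarrow>
           u \<in> U \<and> (f ^^ n) (\<gamma> u) \<in> Ys f ((f ^^ n) u) e \<inter> Yu f ((f ^^ n) y2) e"
proof -
  have "y1 \<in> U" and U_open: "u_open f U" and \<gamma>_cont: "u_continuous_on f U \<gamma>" and "\<gamma> y1 = y2"
    and unif: "\<And>e. 0 < e \<Longrightarrow> \<exists>K. \<forall>k\<ge>K. \<forall>z\<in>U. dist ((f ^^ k) z) ((f ^^ k) (\<gamma> z)) < e"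
    using assms(3) unfolding stable_local_conj_def by auto
  obtain N where N: "\<And>k z. N \<le> k \<Longrightarrow> z \<in> U \<Longrightarrow> dist ((f ^^ k) z) ((f ^^ k) (\<gamma> z)) < e"
    using unif[OF \<open>0 < e\<close>] by auto
  obtain \<rho> where "0 < \<rho>"
    and shadow: "\<And>u m. u \<in> U \<Longrightarrow> dist y2 (\<gamma> u) < \<rho> \<Longrightarrow> dist ((f ^^ m) y1) ((f ^^ m) u) < \<rho> \<Longrightarrow>
                   dist ((f ^^ m) y2) ((f ^^ m) (\<gamma> u)) < e"
    using conj_preserves_forward_closeness[OF assms(2) \<open>y1 \<in> U\<close> \<open>\<gamma> y1 = y2\<close> unif \<open>0 < e\<close>] by blast
  obtain d where "0 < d" and d: "\<forall>u\<in>U \<inter> Yu f y1 d. \<gamma> u \<in> Yu f y2 (min e \<rho>)"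
    using \<gamma>_cont[unfolded u_continuous_on_def, rule_format, OF \<open>y1 \<in> U\<close>, of "min e \<rho>"]
      \<open>\<gamma> y1 = y2\<close> \<open>0 < e\<close> \<open>0 < \<rho>\<close> by auto
  obtain r where "0 < r" and r: "Yu f y1 r \<subseteq> U"
    using U_open \<open>y1 \<in> U\<close> unfolding u_open_def by blast
  define \<delta> where "\<delta> = min r (min d \<rho>)"
  have "\<delta> \<le> r" "\<delta> \<le> d" "\<delta> \<le> \<rho>" by (simp_all add: \<delta>_def)
  have "u \<in> U \<and> (f ^^ n) (\<gamma> u) \<in> Ys f ((f ^^ n) u) e \<inter> Yu f ((f ^^ n) y2) e"
    if "N \<le> n" and "(f ^^ n) u \<in> Yu f ((f ^^ n) y1) \<delta>" for n u
  proof -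
    have "u \<in> Yu f y1 \<delta>" and y1_u: "\<And>m. m \<le> n \<Longrightarrow> dist ((f ^^ m) y1) ((f ^^ m) u) < \<delta>"
      using that(2) unfolding Yu_funpow_iff[OF assms(1)] by auto
    then have "u \<in> U" and "u \<in> Yu f y1 d"
      using r Yu_mono[OF \<open>\<delta> \<le> r\<close>] Yu_mono[OF \<open>\<delta> \<le> d\<close>] by blast+
    then have \<gamma>u: "\<gamma> u \<in> Yu f y2 (min e \<rho>)" using d by blast
    have "(f ^^ n) (\<gamma> u) \<in> Ys f ((f ^^ n) u) e"
      unfolding Ys_funpow_iff using N \<open>u \<in> U\<close> \<open>N \<le> n\<close> by simp
    moreover have "(f ^^ n) (\<gamma> u) \<in> Yu f ((f ^^ n) y2) e"
      unfolding Yu_funpow_iff[OF assms(1)]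
    proof (intro conjI allI impI)
      show "\<gamma> u \<in> Yu f y2 e" using \<gamma>u Yu_mono[of "min e \<rho>" e] by auto
      have "dist y2 (\<gamma> u) < \<rho>" using Yu_dist_center[OF \<gamma>u] by simp
      then show "dist ((f ^^ m) y2) ((f ^^ m) (\<gamma> u)) < e" if "m \<le> n" for m
        using shadow[OF \<open>u \<in> U\<close>] y1_u[OF that] \<open>\<delta> \<le> \<rho>\<close> by simp
    qed
    ultimately show ?thesis using \<open>u \<in> U\<close> by blast
  qed
  moreover have "0 < \<delta>" using \<open>0 < r\<close> \<open>0 < d\<close> \<open>0 < \<rho>\<close> by (simp add: \<delta>_def)
  ultimately show ?thesis by blast
qed

theorem mainTheorem5:
  fixes f :: "'a::metric_space \<Rightarrow> 'a" and y1 y2 :: 'a and U V :: "'a set"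
    and \<gamma> :: "'a \<Rightarrow> 'a" and \<epsilon>Y \<epsilon> :: real
  assumes "compact (UNIV :: 'a set)"
    and "bij f" and "continuous_on UNIV f" and "continuous_on UNIV (inv f)"
    and "expansive_const f \<epsilon>Y"
    and "adapted_metric f"
    and "stable_local_conj f y1 y2 U V \<gamma>"
    and "0 < \<epsilon>" and "\<epsilon> \<le> \<epsilon>Y"
  shows "\<exists>\<delta>>0. \<exists>N::nat. \<forall>n\<ge>N. \<forall>z\<in>Yu f (fpow f (int n) y1) \<delta>.
           fpow f (- int n) z \<in> U \<and>
           fpow f (int n) (\<gamma> (fpow f (- int n) z)) \<in> Yu f (fpow f (int n) y2) \<epsilon> \<and>
           fpow f (int n) (\<gamma> (fpow f (- int n) z)) \<in> Ys f z \<epsilon> \<and>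
           fpow f (int n) (\<gamma> (fpow f (- int n) z)) = bracket f \<epsilon> z (fpow f (int n) y2)"
proof -
  obtain c where "\<epsilon>Y < c" and c: "expansive_const f c"
    using expansive_const_enlarge[OF assms(1-5)] by blast
  define e where "e = min \<epsilon> (c - \<epsilon>Y)"
  have "0 < e" "e \<le> \<epsilon>" "\<epsilon> + e \<le> c"
    using \<open>\<epsilon>Y < c\<close> \<open>0 < \<epsilon>\<close> \<open>\<epsilon> \<le> \<epsilon>Y\<close> by (auto simp: e_def)
  obtain \<delta> N where "0 < \<delta>" and conj: "\<And>n u. N \<le> n \<Longrightarrow> (f ^^ n) u \<in> Yu f ((f ^^ n) y1) \<delta> \<Longrightarrow>
      u \<in> U \<and> (f ^^ n) (\<gamma> u) \<in> Ys f ((f ^^ n) u) e \<inter> Yu f ((f ^^ n) y2) e"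
    using stable_local_conj_iterate_into_local_sets[OF assms(2,3,7) \<open>0 < e\<close>] by blast
  have "(inv f ^^ n) z \<in> U \<and> (f ^^ n) (\<gamma> ((inv f ^^ n) z)) \<in> Yu f ((f ^^ n) y2) \<epsilon> \<and>
      (f ^^ n) (\<gamma> ((inv f ^^ n) z)) \<in> Ys f z \<epsilon> \<and>
      (f ^^ n) (\<gamma> ((inv f ^^ n) z)) = bracket f \<epsilon> z ((f ^^ n) y2)"
    if "N \<le> n" and "z \<in> Yu f ((f ^^ n) y1) \<delta>" for n z
  proof -
    have z: "(f ^^ n) ((inv f ^^ n) z) = z" using fn_o_inv_fn_is_id[OF assms(2)] by (metis comp_apply)
    have "(inv f ^^ n) z \<in> U"
      and w: "(f ^^ n) (\<gamma> ((inv f ^^ n) z)) \<in> Ys f z e \<inter> Yu f ((f ^^ n) y2) e"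
      using conj[OF that(1), of "(inv f ^^ n) z", unfolded z] that(2) by auto
    then show ?thesis
      using bracket_eqI[OF c \<open>\<epsilon> + e \<le> c\<close> \<open>e \<le> \<epsilon>\<close> w]
        Ys_mono[OF \<open>e \<le> \<epsilon>\<close>, of f z] Yu_mono[OF \<open>e \<le> \<epsilon>\<close>, of f "(f ^^ n) y2"] by auto
  qed
  then show ?thesis using \<open>0 < \<delta>\<close> by auto
qed

end
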